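(* Let $f:A\to B$ be a strict morphism in $\mathcal G$ (so $\ker f$ and $\operatorname{coker} f$ lie in $\mathcal G$). Then: (1) if $g:X\to A$ is a strict morphism with $f\circ g=0$, the induced map $\tilde g:X\to\ker f$ is a strict morphism; (2) if $h:B\to Y$ is a strict morphism with $h\circ f=0$, the induced map $\bar h:\operatorname{coker} f\to Y$ is a strict morphism. Consequently $\ker f$ and $\operatorname{coker} f$ are also a kernel and cokernel of $f$ in the category whose objects are those of $\mathcal G$ and whose morphisms are the strict morphisms.
   Context: Let $\Lambda$ be a finite dimensional algebra over a field and $\mathrm{mod}\text-\Lambda$ the category of finitely generated right $\Lambda$-modules. Fix a torsion class $\mathcal G\subseteq\mathrm{mod}\text-\Lambda$, i.e. a class of modules closed under isomorphisms, extensions and quotients. For $B\in\mathcal G$, a subobject of $B$ is a submodule of $B$ that lies in $\mathcal G$. A subobject $A\subseteq B$ is a strict subobject if $A\cap B'\in\mathcal G$ for every subobject $B'$ of $B$. A strict morphism is a module homomorphism $f:A\to B$ with $A,B\in\mathcal G$ such that $\ker f\in\mathcal G$, $\ker f$ is a strict subobject of $A$, and $\operatorname{im} f$ is a strict subobject of $B$. *)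

theory Defs
  imports Main
begin

text \<open>
  Right Lambda-modules are represented as submodules (carrier sets) of an ambient
  right Lambda-module on the additive group 'a, with right action act.
  Homomorphisms are functions of type 'a => 'a, only their behaviour on the
  domain carrier matters.
\<close>

definition fd_algebra :: "('k::field \<Rightarrow> 'l::ring_1) \<Rightarrow> bool" where
  "fd_algebra emb \<longleftrightarrow>
     emb 1 = 1 \<and> (\<forall>a b. emb (a + b) = emb a + emb b) \<and> (\<forall>a b. emb (a * b) = emb a * emb b)
     \<and> (\<forall>a l. emb a * l = l * emb a)
     \<and> (\<exists>Bs. finite Bs \<and> (\<forall>l. \<exists>c. l = (\<Sum>b\<in>Bs. emb (c b) * b)))"

definition right_module :: "('a::ab_group_add \<Rightarrow> 'l::ring_1 \<Rightarrow> 'a) \<Rightarrow> bool" where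
  "right_module act \<longleftrightarrow>
     (\<forall>x y l. act (x + y) l = act x l + act y l)
     \<and> (\<forall>x l m. act x (l + m) = act x l + act x m)
     \<and> (\<forall>x l m. act x (l * m) = act (act x l) m)
     \<and> (\<forall>x. act x 1 = x)"

definition submod :: "('a::ab_group_add \<Rightarrow> 'l::ring_1 \<Rightarrow> 'a) \<Rightarrow> 'a set \<Rightarrow> bool" where
  "submod act S \<longleftrightarrow> 0 \<in> S \<and> (\<forall>x\<in>S. \<forall>y\<in>S. x + y \<in> S) \<and> (\<forall>x\<in>S. \<forall>l. act x l \<in> S)"

definition fgmod :: "('a::ab_group_add \<Rightarrow> 'l::ring_1 \<Rightarrow> 'a) \<Rightarrow> 'a set \<Rightarrow> bool" where
  "fgmod act S \<longleftrightarrow> submod act S \<and>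
     (\<exists>F. finite F \<and> F \<subseteq> S \<and> S = {(\<Sum>x\<in>F. act x (c x)) | c. True})"

definition mhom :: "('a::ab_group_add \<Rightarrow> 'l::ring_1 \<Rightarrow> 'a) \<Rightarrow> ('a \<Rightarrow> 'a) \<Rightarrow> 'a set \<Rightarrow> 'a set \<Rightarrow> bool" where
  "mhom act f S T \<longleftrightarrow> (\<forall>x\<in>S. f x \<in> T) \<and> (\<forall>x\<in>S. \<forall>y\<in>S. f (x + y) = f x + f y)
     \<and> (\<forall>x\<in>S. \<forall>l. f (act x l) = act (f x) l)"

definition mker :: "('a \<Rightarrow> 'a::ab_group_add) \<Rightarrow> 'a set \<Rightarrow> 'a set" where
  "mker f S = {x\<in>S. f x = 0}"

definition torsion_class :: "('a::ab_group_add \<Rightarrow> 'l::ring_1 \<Rightarrow> 'a) \<Rightarrow> ('a set \<Rightarrow> bool) \<Rightarrow> bool" where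
  "torsion_class act G \<longleftrightarrow>
     (\<forall>S. G S \<longrightarrow> fgmod act S)
     \<and> (\<forall>S T f. G S \<and> fgmod act T \<and> mhom act f S T \<and> bij_betw f S T \<longrightarrow> G T)
     \<and> (\<forall>S T f. G S \<and> fgmod act T \<and> mhom act f S T \<and> f ` S = T \<longrightarrow> G T)
     \<and> (\<forall>L M N i p. G L \<and> G N \<and> fgmod act M \<and> mhom act i L M \<and> inj_on i L
          \<and> mhom act p M N \<and> p ` M = N \<and> i ` L = mker p M \<longrightarrow> G M)"

definition subobj :: "('a::ab_group_add \<Rightarrow> 'l::ring_1 \<Rightarrow> 'a) \<Rightarrow> ('a set \<Rightarrow> bool) \<Rightarrow> 'a set \<Rightarrow> 'a set \<Rightarrow> bool" where
  "subobj act G B A \<longleftrightarrow> A \<subseteq> B \<and> submod act A \<and> G A"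

definition strict_subobj :: "('a::ab_group_add \<Rightarrow> 'l::ring_1 \<Rightarrow> 'a) \<Rightarrow> ('a set \<Rightarrow> bool) \<Rightarrow> 'a set \<Rightarrow> 'a set \<Rightarrow> bool" where
  "strict_subobj act G B A \<longleftrightarrow> subobj act G B A \<and> (\<forall>B'. subobj act G B B' \<longrightarrow> G (A \<inter> B'))"

definition strict_morph :: "('a::ab_group_add \<Rightarrow> 'l::ring_1 \<Rightarrow> 'a) \<Rightarrow> ('a set \<Rightarrow> bool) \<Rightarrow> ('a \<Rightarrow> 'a) \<Rightarrow> 'a set \<Rightarrow> 'a set \<Rightarrow> bool" where
  "strict_morph act G f A B \<longleftrightarrow> G A \<and> G B \<and> mhom act f A B \<and> G (mker f A)
     \<and> strict_subobj act G A (mker f A) \<and> strict_subobj act G B (f ` A)"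

end

theory Submission
  imports Defs
begin

text \<open>
  Kernel side: a subobject of \<open>ker f\<close> is also a subobject of \<open>A\<close>, so strictness of the
  image of \<open>g\<close> in \<open>A\<close> passes to its corestriction to \<open>ker f\<close>.

  Cokernel side: for the projection \<open>p : B \<rightarrow> C\<close> with kernel \<open>f(A)\<close>, the map \<open>h\<close> induces
  \<open>h\<close>-bar on \<open>C\<close> with image \<open>h(B)\<close> and kernel \<open>p(ker h)\<close>.  The kernel is strict: for
  a subobject \<open>B'\<close> of \<open>C\<close> we have \<open>p(ker h) \<inter> B' = p(ker h \<inter> p\<^sup>-\<^sup>1 B')\<close>, and the
  preimage \<open>p\<^sup>-\<^sup>1 B'\<close> is an extension of \<open>B'\<close> by \<open>f(A)\<close>, hence lies in \<open>\<G>\<close>; so the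
  intersection lies in \<open>\<G>\<close> by strictness of \<open>ker h\<close>, and its image by closure under
  quotients.
\<close>

lemma submod_zero: "submod act S \<Longrightarrow> 0 \<in> S"
  unfolding submod_def by blast

lemma submod_add: "submod act S \<Longrightarrow> x \<in> S \<Longrightarrow> y \<in> S \<Longrightarrow> x + y \<in> S"
  unfolding submod_def by blast

lemma submod_act: "submod act S \<Longrightarrow> x \<in> S \<Longrightarrow> act x l \<in> S"
  unfolding submod_def by blast

lemma submod_sum: "submod act S \<Longrightarrow> (\<And>i. i \<in> I \<Longrightarrow> v i \<in> S) \<Longrightarrow> sum v I \<in> S"
  by (induction I rule: infinite_finite_induct) (auto intro: submod_zero submod_add)

lemma submod_lincomb: "submod act S \<Longrightarrow> v ` I \<subseteq> S \<Longrightarrow> (\<Sum>i\<in>I. act (v i) (c i)) \<in> S"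
  by (rule submod_sum) (auto intro: submod_act)

lemma mhom_into: "mhom act p S T \<Longrightarrow> x \<in> S \<Longrightarrow> p x \<in> T"
  unfolding mhom_def by blast

lemma mhom_add: "mhom act p S T \<Longrightarrow> x \<in> S \<Longrightarrow> y \<in> S \<Longrightarrow> p (x + y) = p x + p y"
  unfolding mhom_def by blast

lemma mhom_act: "mhom act p S T \<Longrightarrow> x \<in> S \<Longrightarrow> p (act x l) = act (p x) l"
  unfolding mhom_def by blast

lemma mhom_zero:
  assumes "mhom act p S T" "submod act S"
  shows "p 0 = 0"
  using mhom_add[OF assms(1), of 0 0] submod_zero[OF assms(2)] by simp

lemma mhom_onto_image: "mhom act p S T \<Longrightarrow> mhom act p S (p ` S)"
  unfolding mhom_def by blast

lemma mhom_restrict: "mhom act p S T \<Longrightarrow> S' \<subseteq> S \<Longrightarrow> p ` S' \<subseteq> T' \<Longrightarrow> mhom act p S' T'"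
  unfolding mhom_def by blast

lemma mhom_sum:
  assumes "mhom act p S T" "submod act S" "\<And>i. i \<in> I \<Longrightarrow> v i \<in> S"
  shows "p (sum v I) = (\<Sum>i\<in>I. p (v i))"
  using assms(3)
proof (induction I rule: infinite_finite_induct)
  case (insert i I)
  then show ?case
    using mhom_add[OF assms(1)] submod_sum[OF assms(2), of I v] by simp
qed (simp_all add: mhom_zero[OF assms(1,2)])

lemma mhom_lincomb:
  assumes "mhom act p S T" "submod act S" "v ` I \<subseteq> S"
  shows "p (\<Sum>i\<in>I. act (v i) (c i)) = (\<Sum>i\<in>I. act (p (v i)) (c i))"
proof -
  have "p (\<Sum>i\<in>I. act (v i) (c i)) = (\<Sum>i\<in>I. p (act (v i) (c i)))"
    by (rule mhom_sum) (use assms in \<open>auto intro: submod_act\<close>)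
  also have "\<dots> = (\<Sum>i\<in>I. act (p (v i)) (c i))"
    using assms by (auto intro!: sum.cong simp: mhom_act)
  finally show ?thesis .
qed

lemma submod_image:
  assumes "mhom act p S T" "submod act S"
  shows "submod act (p ` S)"
proof -
  have "0 \<in> p ` S"
    using mhom_zero[OF assms] submod_zero[OF assms(2)] by force
  moreover have "p x + p y \<in> p ` S" if "x \<in> S" "y \<in> S" for x y
    using that mhom_add[OF assms(1)] submod_add[OF assms(2)] by (metis image_eqI)
  moreover have "act (p x) l \<in> p ` S" if "x \<in> S" for x l
    using that mhom_act[OF assms(1)] submod_act[OF assms(2)] by (metis image_eqI)
  ultimately show ?thesis
    unfolding submod_def by blast
qed

lemma submod_preimage:
  assumes "mhom act p B C" "submod act B" "submod act N"
  shows "submod act {x \<in> B. p x \<in> N}"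
  unfolding submod_def
proof (intro conjI ballI allI)
  show "0 \<in> {x \<in> B. p x \<in> N}"
    using mhom_zero[OF assms(1,2)] submod_zero[OF assms(2)] submod_zero[OF assms(3)] by simp
next
  fix x y assume "x \<in> {x \<in> B. p x \<in> N}" "y \<in> {x \<in> B. p x \<in> N}"
  then show "x + y \<in> {x \<in> B. p x \<in> N}"
    using mhom_add[OF assms(1)] submod_add[OF assms(2)] submod_add[OF assms(3)] by auto
next
  fix x l assume "x \<in> {x \<in> B. p x \<in> N}"
  then show "act x l \<in> {x \<in> B. p x \<in> N}"
    using mhom_act[OF assms(1)] submod_act[OF assms(2)] submod_act[OF assms(3)] by auto
qed

definition rspan :: "('a::ab_group_add \<Rightarrow> 'l::ring_1 \<Rightarrow> 'a) \<Rightarrow> 'a set \<Rightarrow> 'a set" where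
  "rspan act F = {(\<Sum>x\<in>F. act x (c x)) | c. True}"

lemma fgmod_iff_rspan:
  "fgmod act S \<longleftrightarrow> submod act S \<and> (\<exists>F. finite F \<and> F \<subseteq> S \<and> S = rspan act F)"
  unfolding fgmod_def rspan_def by blast

lemma rspan_sumI: "(\<Sum>x\<in>F. act x (c x)) \<in> rspan act F"
  unfolding rspan_def by blast

lemma rspan_subset: "submod act S \<Longrightarrow> F \<subseteq> S \<Longrightarrow> rspan act F \<subseteq> S"
  unfolding rspan_def using submod_lincomb[of act S id F] by auto

definition induced_hom :: "('a \<Rightarrow> 'b) \<Rightarrow> ('a \<Rightarrow> 'c) \<Rightarrow> 'a set \<Rightarrow> 'c \<Rightarrow> 'b" where
  "induced_hom h p B y = h (inv_into B p y)"

locale rmodule =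
  fixes act :: "'a::ab_group_add \<Rightarrow> 'l::ring_1 \<Rightarrow> 'a"
  assumes right_module: "right_module act"
begin

lemma act_add_left: "act (x + y) l = act x l + act y l"
  using right_module unfolding right_module_def by blast

lemma act_add_right: "act x (l + m) = act x l + act x m"
  using right_module unfolding right_module_def by blast

lemma act_mult: "act x (l * m) = act (act x l) m"
  using right_module unfolding right_module_def by blast

lemma act_one: "act x 1 = x"
  using right_module unfolding right_module_def by blast

lemma act_zero_left: "act 0 l = 0"
  using act_add_left[of 0 0 l] by simp

lemma act_zero_right: "act x 0 = 0"
  using act_add_right[of x 0 0] by simp

lemma act_minus_one: "act x (-1) = - x"
  using act_add_right[of x 1 "-1"] by (simp add: act_one act_zero_right add.commute eq_neg_iff_add_eq_0)

lemma act_sum: "act (sum v I) l = (\<Sum>i\<in>I. act (v i) l)"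
  by (induction I rule: infinite_finite_induct) (simp_all add: act_zero_left act_add_left)

lemma submod_diff:
  assumes "submod act S" "x \<in> S" "y \<in> S"
  shows "x - y \<in> S"
  using submod_add[OF assms(1,2) submod_act[OF assms(1,3), of "-1"]] by (simp add: act_minus_one)

lemma mhom_diff:
  assumes "mhom act p S T" "submod act S" "x \<in> S" "y \<in> S"
  shows "p (x - y) = p x - p y"
  using mhom_add[OF assms(1) submod_diff[OF assms(2-4)] assms(4)] by simp

lemma submod_rspan: "submod act (rspan act F)"
  unfolding submod_def
proof (intro conjI ballI allI)
  show "0 \<in> rspan act F"
    using rspan_sumI[where act=act and F=F and c="\<lambda>_. 0"] by (simp add: act_zero_right)
next
  fix x y assume "x \<in> rspan act F" "y \<in> rspan act F"
  then obtain c d where "x = (\<Sum>z\<in>F. act z (c z))" "y = (\<Sum>z\<in>F. act z (d z))"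
    unfolding rspan_def by blast
  then have "x + y = (\<Sum>z\<in>F. act z (c z + d z))"
    by (simp add: act_add_right sum.distrib)
  then show "x + y \<in> rspan act F"
    using rspan_sumI by metis
next
  fix x l assume "x \<in> rspan act F"
  then obtain c where "x = (\<Sum>z\<in>F. act z (c z))"
    unfolding rspan_def by blast
  then have "act x l = (\<Sum>z\<in>F. act z (c z * l))"
    by (simp add: act_sum act_mult)
  then show "act x l \<in> rspan act F"
    using rspan_sumI by metis
qed

lemma rspan_base:
  assumes "finite F" "x \<in> F"
  shows "x \<in> rspan act F"
proof -
  have "(\<Sum>y\<in>F. act y (if y = x then 1 else 0)) = (\<Sum>y\<in>F. if y = x then y else 0)"
    by (rule sum.cong) (simp_all add: act_one act_zero_right)
  also have "\<dots> = x"
    using assms by simp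
  finally show ?thesis
    using rspan_sumI[where c="\<lambda>y. if y = x then 1 else 0"] by metis
qed

lemma lincomb_in_rspan:
  assumes "finite F" "v ` I \<subseteq> F"
  shows "(\<Sum>i\<in>I. act (v i) (c i)) \<in> rspan act F"
  by (rule submod_lincomb[OF submod_rspan]) (use assms rspan_base in blast)

lemma fgmod_image:
  assumes "fgmod act S" "mhom act p S T"
  shows "fgmod act (p ` S)"
proof -
  obtain F where F: "finite F" "F \<subseteq> S" "S = rspan act F" and sS: "submod act S"
    using assms(1) unfolding fgmod_iff_rspan by blast
  have "p ` S = rspan act (p ` F)"
  proof
    show "rspan act (p ` F) \<subseteq> p ` S"
      using rspan_subset[OF submod_image[OF assms(2) sS]] F(2) by blast
  next
    show "p ` S \<subseteq> rspan act (p ` F)"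
    proof
      fix y assume "y \<in> p ` S"
      then obtain c where "y = p (\<Sum>x\<in>F. act (id x) (c x))"
        using F(3) unfolding rspan_def by auto
      also have "\<dots> = (\<Sum>x\<in>F. act (p x) (c x))"
        using mhom_lincomb[OF assms(2) sS, of id F] F(2) by simp
      also have "\<dots> \<in> rspan act (p ` F)"
        using lincomb_in_rspan F(1) by blast
      finally show "y \<in> rspan act (p ` F)" .
    qed
  qed
  then show ?thesis
    unfolding fgmod_iff_rspan using submod_image[OF assms(2) sS] F by blast
qed

lemma fgmod_preimage:
  assumes hom: "mhom act p B C" and sB: "submod act B"
    and N: "fgmod act N" "N \<subseteq> p ` B" and ker: "fgmod act (mker p B)"
  shows "fgmod act {x \<in> B. p x \<in> N}" (is "fgmod act ?M")
proof -
  obtain FN where FN: "finite FN" "FN \<subseteq> N" "N = rspan act FN" and sN: "submod act N"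
    using N(1) unfolding fgmod_iff_rspan by blast
  obtain FK where FK: "finite FK" "FK \<subseteq> mker p B" "mker p B = rspan act FK"
    using ker unfolding fgmod_iff_rspan by blast
  define s where "s = inv_into B p"
  have s: "s y \<in> B \<and> p (s y) = y" if "y \<in> N" for y
    unfolding s_def using that N(2) by (auto intro: inv_into_into f_inv_into_f)
  define F where "F = s ` FN \<union> FK"
  have "mker p B \<subseteq> ?M"
    using submod_zero[OF sN] unfolding mker_def by auto
  then have F: "finite F" "F \<subseteq> ?M"
    using FN(1,2) FK(1,2) s unfolding F_def by auto
  have "?M \<subseteq> rspan act F"
  proof
    fix z assume z: "z \<in> ?M"
    then obtain c where pz: "p z = (\<Sum>y\<in>FN. act y (c y))"
      using FN(3) unfolding rspan_def by auto
    define w where "w = (\<Sum>y\<in>FN. act (s y) (c y))"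
    have sFN: "s ` FN \<subseteq> B"
      using s FN(2) by blast
    have wB: "w \<in> B"
      unfolding w_def using submod_lincomb[OF sB sFN] by simp
    have "p w = (\<Sum>y\<in>FN. act (p (s y)) (c y))"
      unfolding w_def using mhom_lincomb[OF hom sB sFN] .
    also have "\<dots> = p z"
      unfolding pz using s FN(2) by (intro sum.cong) auto
    finally have "z - w \<in> mker p B"
      unfolding mker_def using z wB mhom_diff[OF hom sB] submod_diff[OF sB] by simp
    then have "z - w \<in> rspan act FK"
      unfolding FK(3) .
    moreover have "rspan act FK \<subseteq> rspan act F"
      using rspan_subset[OF submod_rspan] rspan_base[OF F(1)] unfolding F_def by blast
    moreover have "w \<in> rspan act F"
      unfolding w_def using lincomb_in_rspan F(1) unfolding F_def by blast
    ultimately have "(z - w) + w \<in> rspan act F"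
      using submod_add[OF submod_rspan] by blast
    then show "z \<in> rspan act F" by simp
  qed
  then have "?M = rspan act F"
    using rspan_subset[OF submod_preimage[OF hom sB sN] F(2)] by blast
  then show ?thesis
    unfolding fgmod_iff_rspan using submod_preimage[OF hom sB sN] F by blast
qed

context
  fixes p h :: "'a \<Rightarrow> 'a" and B C Y :: "'a set"
  assumes p: "mhom act p B C" "p ` B = C" and h: "mhom act h B Y"
    and sB: "submod act B" and ker: "mker p B \<subseteq> mker h B"
begin

lemma induced_hom_comp:
  assumes x: "x \<in> B"
  shows "induced_hom h p B (p x) = h x"
proof -
  define x' where "x' = inv_into B p (p x)"
  have x': "x' \<in> B" "p x' = p x"
    unfolding x'_def using x by (auto intro: inv_into_into f_inv_into_f)
  then have "x - x' \<in> mker p B"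
    unfolding mker_def using x mhom_diff[OF p(1) sB] submod_diff[OF sB] by simp
  then have "h (x - x') = 0"
    using ker unfolding mker_def by blast
  then have "h x = h x'"
    using mhom_diff[OF h sB x x'(1)] by simp
  then show ?thesis
    unfolding induced_hom_def x'_def by simp
qed

lemma mhom_induced_hom: "mhom act (induced_hom h p B) C Y"
proof -
  have "induced_hom h p B (p x) \<in> Y" if "x \<in> B" for x
    using that induced_hom_comp mhom_into[OF h] by simp
  moreover have "induced_hom h p B (p x + p y) = induced_hom h p B (p x) + induced_hom h p B (p y)"
    if "x \<in> B" "y \<in> B" for x y
    using that submod_add[OF sB] mhom_add[OF h] induced_hom_comp
    by (simp flip: mhom_add[OF p(1)])
  moreover have "induced_hom h p B (act (p x) l) = act (induced_hom h p B (p x)) l"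
    if "x \<in> B" for x l
    using that submod_act[OF sB] mhom_act[OF h] induced_hom_comp
    by (simp flip: mhom_act[OF p(1)])
  ultimately show ?thesis
    unfolding mhom_def p(2)[symmetric] by blast
qed

lemma image_induced_hom: "induced_hom h p B ` C = h ` B"
  unfolding p(2)[symmetric] image_image using induced_hom_comp by simp

lemma mker_induced_hom: "mker (induced_hom h p B) C = p ` mker h B"
  unfolding p(2)[symmetric] mker_def using induced_hom_comp by force

end

end

lemma strict_subobj_restrict:
  assumes "strict_subobj act G A I" "I \<subseteq> K" "K \<subseteq> A"
  shows "strict_subobj act G K I"
  using assms unfolding strict_subobj_def subobj_def by blast

lemma strict_morph_corestrict:
  assumes g: "strict_morph act G g X A" and K: "subobj act G A K" and gX: "g ` X \<subseteq> K"
  shows "strict_morph act G g X K"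
proof -
  have hom: "mhom act g X A" and im: "strict_subobj act G A (g ` X)"
    using g unfolding strict_morph_def by auto
  have "mhom act g X K"
    using hom gX unfolding mhom_def by blast
  moreover have "strict_subobj act G K (g ` X)"
    using strict_subobj_restrict[OF im gX] K unfolding subobj_def by blast
  ultimately show ?thesis
    using g K unfolding strict_morph_def subobj_def by blast
qed

locale torsion_context = rmodule act
  for act :: "'a::ab_group_add \<Rightarrow> 'l::ring_1 \<Rightarrow> 'a" +
  fixes G :: "'a set \<Rightarrow> bool"
  assumes torsion_class: "torsion_class act G"
begin

lemma G_fgmod: "G S \<Longrightarrow> fgmod act S"
  using conjunct1[OF torsion_class[unfolded torsion_class_def]] by blast

lemma G_quotient: "G S \<Longrightarrow> fgmod act T \<Longrightarrow> mhom act p S T \<Longrightarrow> p ` S = T \<Longrightarrow> G T"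
  using conjunct1[OF conjunct2[OF conjunct2[OF torsion_class[unfolded torsion_class_def]]]]
  by blast

lemma G_submod: "G S \<Longrightarrow> submod act S"
  using G_fgmod unfolding fgmod_def by blast

lemma G_image:
  assumes "G S" "mhom act p S T"
  shows "G (p ` S)"
proof -
  have "fgmod act (p ` S)"
    using fgmod_image[OF G_fgmod[OF assms(1)] assms(2)] .
  then show ?thesis
    using G_quotient[OF assms(1) _ mhom_onto_image[OF assms(2)]] by simp
qed

lemma G_extension:
  assumes "fgmod act M" "mhom act p M T" "G (mker p M)" "G (p ` M)"
  shows "G M"
proof -
  have "mhom act (\<lambda>x. x) (mker p M) M"
    unfolding mhom_def mker_def by simp
  then show ?thesis
    using conjunct2[OF conjunct2[OF conjunct2[OF torsion_class[unfolded torsion_class_def]]]]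
      assms(1,3,4) mhom_onto_image[OF assms(2)]
    by (metis image_ident inj_on_id2)
qed

lemma G_preimage:
  assumes hom: "mhom act p B C" and sB: "submod act B"
    and N: "G N" "N \<subseteq> p ` B" and ker: "G (mker p B)"
  shows "G {x \<in> B. p x \<in> N}" (is "G ?M")
proof (rule G_extension)
  show "fgmod act ?M"
    using fgmod_preimage[OF hom sB G_fgmod[OF N(1)] N(2) G_fgmod[OF ker]] .
  show "mhom act p ?M N"
    by (rule mhom_restrict[OF hom]) auto
  have "mker p ?M = mker p B"
    using submod_zero[OF G_submod[OF N(1)]] unfolding mker_def by auto
  then show "G (mker p ?M)"
    using ker by simp
  have "p ` ?M = N"
    using N(2) by blast
  then show "G (p ` ?M)"
    using N(1) by simp
qed

lemma G_zero:
  assumes "G S"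
  shows "G {0}"
proof -
  have "mhom act (\<lambda>_. 0) S {0}"
    unfolding mhom_def by (simp add: act_zero_left)
  moreover have "(\<lambda>_. 0) ` S = {0}"
    using submod_zero[OF G_submod[OF assms]] by blast
  ultimately show ?thesis
    using G_image[OF assms] by metis
qed

lemma strict_subobj_self: "G S \<Longrightarrow> strict_subobj act G S S"
  unfolding strict_subobj_def subobj_def using G_submod by (auto simp: Int_absorb1)

lemma strict_subobj_zero:
  assumes "G S"
  shows "strict_subobj act G S {0}"
proof -
  have "{0} \<inter> B' = {0}" if "subobj act G S B'" for B'
    using that submod_zero unfolding subobj_def by blast
  then show ?thesis
    unfolding strict_subobj_def subobj_def
    using G_zero[OF assms] G_submod[OF G_zero[OF assms]] submod_zero[OF G_submod[OF assms]]
    by auto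
qed

lemma strict_subobj_image:
  assumes K: "strict_subobj act G B K" and GB: "G B"
    and p: "mhom act p B C" "p ` B = C" and ker: "G (mker p B)"
  shows "strict_subobj act G C (p ` K)"
  unfolding strict_subobj_def
proof (intro conjI allI impI)
  have KB: "K \<subseteq> B" and GK: "G K"
    using K unfolding strict_subobj_def subobj_def by auto
  have "mhom act p K C"
    by (rule mhom_restrict[OF p(1) KB]) (use KB p(2) in blast)
  then have "G (p ` K)"
    by (rule G_image[OF GK])
  then show "subobj act G C (p ` K)"
    unfolding subobj_def using KB p(2) G_submod by blast
  fix B' assume B': "subobj act G C B'"
  let ?M = "{x \<in> B. p x \<in> B'}"
  have "G B'" "B' \<subseteq> p ` B"
    using B' p(2) unfolding subobj_def by auto
  then have "G ?M"
    by (rule G_preimage[OF p(1) G_submod[OF GB] _ _ ker])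
  then have "subobj act G B ?M"
    unfolding subobj_def using G_submod by blast
  then have "G (K \<inter> ?M)"
    using K unfolding strict_subobj_def by blast
  moreover have "mhom act p (K \<inter> ?M) C"
    by (rule mhom_restrict[OF p(1)]) (use p(2) in blast)+
  ultimately have "G (p ` (K \<inter> ?M))"
    by (rule G_image)
  moreover have "p ` (K \<inter> ?M) = p ` K \<inter> B'"
    using KB by blast
  ultimately show "G (p ` K \<inter> B')"
    by simp
qed

lemma strict_morph_inclusion:
  assumes "G A" "strict_subobj act G A K"
  shows "strict_morph act G (\<lambda>x. x) K A"
proof -
  have GK: "G K" and KA: "K \<subseteq> A"
    using assms(2) unfolding strict_subobj_def subobj_def by auto
  have "mker (\<lambda>x. x) K = {0}"
    using submod_zero[OF G_submod[OF GK]] unfolding mker_def by blast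
  then show ?thesis
    unfolding strict_morph_def mhom_def
    using assms GK KA G_zero strict_subobj_zero by auto
qed

lemma strict_morph_quotient:
  assumes "G B" "strict_subobj act G B K" "mhom act p B C" "p ` B = C" "mker p B = K"
  shows "strict_morph act G p B C"
proof -
  have "G C"
    using G_image[OF assms(1,3)] assms(4) by simp
  moreover have "G K"
    using assms(2) unfolding strict_subobj_def subobj_def by blast
  ultimately show ?thesis
    unfolding strict_morph_def using assms strict_subobj_self by simp
qed

lemma strict_morph_induced_hom:
  assumes h: "strict_morph act G h B Y"
    and p: "mhom act p B C" "p ` B = C" and kerp: "G (mker p B)" "mker p B \<subseteq> mker h B"
  shows "strict_morph act G (induced_hom h p B) C Y"
proof -
  have GB: "G B" and GY: "G Y" and hom: "mhom act h B Y" and ker: "strict_subobj act G B (mker h B)"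
    and im: "strict_subobj act G Y (h ` B)"
    using h unfolding strict_morph_def by auto
  note sB = G_submod[OF GB]
  have "G C"
    using G_image[OF GB p(1)] p(2) by simp
  moreover have "strict_subobj act G C (mker (induced_hom h p B) C)"
    unfolding mker_induced_hom[OF p hom sB kerp(2)]
    using strict_subobj_image[OF ker GB p kerp(1)] .
  ultimately show ?thesis
    unfolding strict_morph_def image_induced_hom[OF p hom sB kerp(2)]
    using GY im mhom_induced_hom[OF p hom sB kerp(2)] strict_subobj_def subobj_def by blast
qed

end

theorem mainTheorem6:
  fixes emb :: "'k::field \<Rightarrow> 'l::ring_1"
    and act :: "'a::ab_group_add \<Rightarrow> 'l \<Rightarrow> 'a"
    and G :: "'a set \<Rightarrow> bool"
    and f :: "'a \<Rightarrow> 'a" and A B :: "'a set"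
  assumes "fd_algebra emb"
    and "right_module act"
    and "torsion_class act G"
    and "strict_morph act G f A B"
  shows
    "G (mker f A)
     \<and> strict_morph act G (\<lambda>x. x) (mker f A) A
     \<and> (\<forall>g X. strict_morph act G g X A \<and> (\<forall>x\<in>X. f (g x) = 0)
          \<longrightarrow> strict_morph act G g X (mker f A))
     \<and> (\<forall>C p. fgmod act C \<and> mhom act p B C \<and> p ` B = C \<and> mker p B = f ` A
          \<longrightarrow> G C \<and> strict_morph act G p B C
            \<and> (\<forall>h Y. strict_morph act G h B Y \<and> (\<forall>x\<in>A. h (f x) = 0)
                 \<longrightarrow> (\<exists>hb. strict_morph act G hb C Y \<and> (\<forall>x\<in>B. hb (p x) = h x)
                        \<and> (\<forall>hb'. (\<forall>x\<in>B. hb' (p x) = h x) \<longrightarrow> (\<forall>y\<in>C. hb' y = hb y)))))"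
proof -
  interpret torsion_context act G
    using assms(2,3) by (intro torsion_context.intro rmodule.intro torsion_context_axioms.intro)
  have GA: "G A" and GB: "G B" and GK: "G (mker f A)"
    and ker: "strict_subobj act G A (mker f A)" and im: "strict_subobj act G B (f ` A)"
    using assms(4) unfolding strict_morph_def by auto
  have kernel: "strict_morph act G g X (mker f A)"
    if g: "strict_morph act G g X A" "\<forall>x\<in>X. f (g x) = 0" for g X
  proof (rule strict_morph_corestrict[OF g(1)])
    show "subobj act G A (mker f A)"
      using ker unfolding strict_subobj_def by blast
    show "g ` X \<subseteq> mker f A"
      using g unfolding strict_morph_def mhom_def mker_def by auto
  qed
  have cokernel: "\<exists>hb. strict_morph act G hb C Y \<and> (\<forall>x\<in>B. hb (p x) = h x)
                        \<and> (\<forall>hb'. (\<forall>x\<in>B. hb' (p x) = h x) \<longrightarrow> (\<forall>y\<in>C. hb' y = hb y))"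
    if p: "mhom act p B C" "p ` B = C" "mker p B = f ` A"
      and h: "strict_morph act G h B Y" "\<forall>x\<in>A. h (f x) = 0" for p C h Y
  proof (intro exI[of _ "induced_hom h p B"] conjI allI impI ballI)
    have kerp: "G (mker p B)" "mker p B \<subseteq> mker h B"
      using p(3) im h unfolding strict_subobj_def subobj_def strict_morph_def mhom_def mker_def
      by auto
    show "strict_morph act G (induced_hom h p B) C Y"
      by (rule strict_morph_induced_hom[OF h(1) p(1,2) kerp])
    show comp: "induced_hom h p B (p x) = h x" if "x \<in> B" for x
      using induced_hom_comp[OF p(1,2) _ G_submod[OF GB] kerp(2) that] h(1)
      unfolding strict_morph_def by blast
    fix hb' y assume "\<forall>x\<in>B. hb' (p x) = h x" "y \<in> C"
    then show "hb' y = induced_hom h p B y"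
      using p(2) comp by auto
  qed
  show ?thesis
    using GK strict_morph_inclusion[OF GA ker] kernel
      G_image[OF GB] strict_morph_quotient[OF GB im] cokernel
    by auto
qed

end
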